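(* Let $\mathcal{E}_{tr}$ be a finite set of environments and fix a representation $\Phi:\mathcal{X}\to\mathcal{Z}\subseteq\mathbb{R}^d$. Suppose the classifier class $\mathcal{H}_w$ consists of linear models $w(z)=\mathbf{w}^t z$ with $\mathbf{w}$ ranging over a closed, bounded, convex set $W\subseteq\mathbb{R}^d$ with non-empty interior, and suppose the loss $\ell(\mathbf{w}^t z,Y)$ (with $Y\in\mathbb{R}$) is convex and continuous in $\mathbf{w}$. Then a pure strategy Nash equilibrium of the ensemble game exists. Moreover, if at a Nash equilibrium $\{\mathbf{w}^q\}_{q\in\mathcal{E}_{tr}}$ every $\mathbf{w}^q$ lies in the interior of $W$, then the ensemble predictor $z\mapsto(\frac{1}{|\mathcal{E}_{tr}|}\sum_q\mathbf{w}^q)^t z$ composed with $\Phi$ is an invariant predictor among all linear models, i.e. $\bar{\mathbf{w}}=\frac{1}{|\mathcal{E}_{tr}|}\sum_q\mathbf{w}^q$ satisfies $R^e(\bar{\mathbf{w}}^t\Phi)\le R^e(\mathbf{v}^t\Phi)$ for all $\mathbf{v}\in\mathbb{R}^d$ and all $e\in\mathcal{E}_{tr}$.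
   Context: For each $e\in\mathcal{E}_{tr}$ there is a distribution of $(X^e,Y^e)$ with $X^e\in\mathcal{X}\subseteq\mathbb{R}^n$, $Y^e\in\mathbb{R}$; the risk of a predictor $f$ is $R^e(f)=\mathbb{E}[\ell(f(X^e),Y^e)]$. Ensemble game with representation $\Phi$: the players are the environments; player $e$ chooses $\mathbf{w}^e\in W$; its utility is $u_e=-R^e(w^{av}\circ\Phi)$ where $w^{av}(z)=(\frac{1}{|\mathcal{E}_{tr}|}\sum_q\mathbf{w}^q)^t z$. A pure Nash equilibrium is a profile from which no player can strictly increase its utility by unilaterally changing its own $\mathbf{w}^e$ within $W$. *)

theory Defs
  imports "HOL-Probability.Probability"
begin

definition lin_risk ::
  "((real^'n) \<times> real) measure \<Rightarrow> (real \<Rightarrow> real \<Rightarrow> real) \<Rightarrow> (real^'n \<Rightarrow> real^'d) \<Rightarrow> real^'d \<Rightarrow> real"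
  where "lin_risk D l Phi w = (\<integral>p. l (w \<bullet> Phi (fst p)) (snd p) \<partial>D)"

definition w_av :: "'e set \<Rightarrow> ('e \<Rightarrow> real^'d) \<Rightarrow> real^'d"
  where "w_av E ws = (1 / real (card E)) *\<^sub>R (\<Sum>q\<in>E. ws q)"

definition ens_utility ::
  "'e set \<Rightarrow> ('e \<Rightarrow> ((real^'n) \<times> real) measure) \<Rightarrow> (real \<Rightarrow> real \<Rightarrow> real) \<Rightarrow> (real^'n \<Rightarrow> real^'d)
   \<Rightarrow> 'e \<Rightarrow> ('e \<Rightarrow> real^'d) \<Rightarrow> real"
  where "ens_utility E D l Phi e ws = - lin_risk (D e) l Phi (w_av E ws)"

definition ens_pure_NE ::
  "'e set \<Rightarrow> ('e \<Rightarrow> ((real^'n) \<times> real) measure) \<Rightarrow> (real \<Rightarrow> real \<Rightarrow> real) \<Rightarrow> (real^'n \<Rightarrow> real^'d)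
   \<Rightarrow> (real^'d) set \<Rightarrow> ('e \<Rightarrow> real^'d) \<Rightarrow> bool"
  where "ens_pure_NE E D l Phi W ws \<longleftrightarrow>
     (\<forall>q\<in>E. ws q \<in> W) \<and>
     (\<forall>e\<in>E. \<forall>v\<in>W. ens_utility E D l Phi e (ws(e := v)) \<le> ens_utility E D l Phi e ws)"

end

theory Submission
  imports Defs
begin

(*
  Existence: for eta > 0 every player gets a continuous approximate best response, a
  convex combination of the points of a finite net of W weighted by how nearly each of them
  minimises the player's risk.  An approximate fixed point of the resulting map on W^E,
  obtained from Kuhn's combinatorial lemma on a cube indexed by E x Basis, is an
  eta-equilibrium, and a limit point of (1/k)-equilibria is an equilibrium by compactness
  of W and continuity of the convex risks.  (Brouwer's theorem of the library does not apply
  directly: the dimension |E| * d is not the dimension of a type.)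

  Invariance: if w^e lies in the interior of W, moving it by N (y - w_av) moves the average
  to any y in a small ball around w_av, so w_av is a local, hence by convexity a global,
  minimiser of the risk of player e.
*)

definition unit_cube :: "'i set \<Rightarrow> ('i \<Rightarrow> real) set"
  where "unit_cube I = {x. \<forall>i\<in>I. 0 \<le> x i \<and> x i \<le> 1}"

lemma kuhn_lemma_unit_cube:
  fixes label :: "('i \<Rightarrow> real) \<Rightarrow> 'i \<Rightarrow> nat" and p :: nat
  assumes "finite I" "p > 0"
    and label_le_1: "\<And>x i. label x i \<le> 1"
    and label_0: "\<And>x i. x \<in> unit_cube I \<Longrightarrow> i \<in> I \<Longrightarrow> x i = 0 \<Longrightarrow> label x i = 0"
    and label_1: "\<And>x i. x \<in> unit_cube I \<Longrightarrow> i \<in> I \<Longrightarrow> x i = 1 \<Longrightarrow> label x i = 1"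
  obtains x where "x \<in> unit_cube I"
    "\<And>i. i \<in> I \<Longrightarrow> \<exists>y z. y \<in> unit_cube I \<and> z \<in> unit_cube I \<and> label y i \<noteq> label z i \<and>
        (\<forall>j\<in>I. \<bar>y j - x j\<bar> \<le> inverse p \<and> \<bar>z j - x j\<bar> \<le> inverse p)"
proof -
  define n where "n = card I"
  obtain b where b: "bij_betw b {..<n} I"
    using ex_bij_betw_nat_finite[OF \<open>finite I\<close>] by (auto simp: n_def atLeast0LessThan)
  define b' where "b' = inv_into {..<n} b"
  have b'I: "\<And>i. i \<in> I \<Longrightarrow> b' i < n" and bb': "\<And>i. i \<in> I \<Longrightarrow> b (b' i) = i"
    and b'b: "\<And>j. j < n \<Longrightarrow> b' (b j) = j" and bI: "\<And>j. j < n \<Longrightarrow> b j \<in> I"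
    using b by (auto simp: b'_def bij_betw_def inv_into_into f_inv_into_f)
  define pt :: "(nat \<Rightarrow> nat) \<Rightarrow> 'i \<Rightarrow> real" where "pt q i = real (q (b' i)) / real p" for q i
  have pt_cube: "pt q \<in> unit_cube I" if "\<forall>j<n. q j \<le> p" for q
    using that b'I \<open>p > 0\<close> by (auto simp: unit_cube_def pt_def)
  have pt_close: "\<bar>pt r i - pt q i\<bar> \<le> inverse (real p)"
    if "\<forall>j<n. q j \<le> r j \<and> r j \<le> q j + 1" "i \<in> I" for q r i
  proof -
    have "\<bar>real (r (b' i)) - real (q (b' i))\<bar> \<le> 1"
      using that b'I[of i] by fastforce
    then show ?thesis
      using mult_right_mono[of _ 1 "inverse (real p)"]
      by (simp add: pt_def divide_inverse abs_mult left_diff_distrib[symmetric])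
  qed
  obtain q where q_lt: "\<forall>j<n. q j < p" and q_adj: "\<forall>j<n. \<exists>r s.
      (\<forall>k<n. q k \<le> r k \<and> r k \<le> q k + 1) \<and> (\<forall>k<n. q k \<le> s k \<and> s k \<le> q k + 1) \<and>
      label (pt r) (b j) \<noteq> label (pt s) (b j)"
  proof (rule kuhn_lemma[OF \<open>p > 0\<close>, of n "\<lambda>q j. label (pt q) (b j)"])
    show "\<forall>q. (\<forall>j<n. q j \<le> p) \<longrightarrow> (\<forall>j<n. label (pt q) (b j) = 0 \<or> label (pt q) (b j) = 1)"
      using label_le_1 by (metis le_neq_trans less_one)
    show "\<forall>q. (\<forall>j<n. q j \<le> p) \<longrightarrow> (\<forall>j<n. q j = 0 \<longrightarrow> label (pt q) (b j) = 0)"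
      using label_0 pt_cube bI by (simp add: pt_def b'b)
    show "\<forall>q. (\<forall>j<n. q j \<le> p) \<longrightarrow> (\<forall>j<n. q j = p \<longrightarrow> label (pt q) (b j) = 1)"
      using label_1 pt_cube bI \<open>p > 0\<close> by (simp add: pt_def b'b)
  qed blast
  have box_cube: "pt r \<in> unit_cube I" if "\<forall>k<n. q k \<le> r k \<and> r k \<le> q k + 1" for r
    using that q_lt by (intro pt_cube) (metis Suc_eq_plus1 Suc_leI le_trans)
  show ?thesis
  proof (rule that)
    show "pt q \<in> unit_cube I"
      using q_lt by (intro pt_cube) (simp add: less_imp_le)
    fix i assume "i \<in> I"
    then obtain r s where "\<forall>k<n. q k \<le> r k \<and> r k \<le> q k + 1" "\<forall>k<n. q k \<le> s k \<and> s k \<le> q k + 1"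
      "label (pt r) i \<noteq> label (pt s) i"
      using q_adj b'I bb' by metis
    then show "\<exists>y z. y \<in> unit_cube I \<and> z \<in> unit_cube I \<and> label y i \<noteq> label z i \<and>
        (\<forall>j\<in>I. \<bar>y j - pt q j\<bar> \<le> inverse p \<and> \<bar>z j - pt q j\<bar> \<le> inverse p)"
      using box_cube pt_close by blast
  qed
qed

lemma approx_fixpoint_unit_cube:
  fixes f :: "('i \<Rightarrow> real) \<Rightarrow> 'i \<Rightarrow> real"
  assumes "finite I"
    and maps: "\<And>x. x \<in> unit_cube I \<Longrightarrow> f x \<in> unit_cube I"
    and unif: "\<And>\<epsilon>. \<epsilon> > 0 \<Longrightarrow> \<exists>\<delta>>0. \<forall>x\<in>unit_cube I. \<forall>y\<in>unit_cube I.
                 (\<forall>i\<in>I. \<bar>x i - y i\<bar> \<le> \<delta>) \<longrightarrow> (\<forall>i\<in>I. \<bar>f x i - f y i\<bar> \<le> \<epsilon>)"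
    and "\<epsilon> > 0"
  obtains x where "x \<in> unit_cube I" "\<And>i. i \<in> I \<Longrightarrow> \<bar>f x i - x i\<bar> \<le> \<epsilon>"
proof -
  (* Label 0 forces y i \<le> f y i and label 1 forces f y i \<le> y i (also at the faces, since f
     maps the cube into itself), so nearby points with different labels in coordinate i pin
     f - id near 0 in that coordinate. *)
  define label :: "('i \<Rightarrow> real) \<Rightarrow> 'i \<Rightarrow> nat"
    where "label x i = (if x i < 1 \<and> x i \<le> f x i then 0 else 1)" for x i
  have label_gap: "\<bar>f y i - y i\<bar> \<le> \<bar>f z i - f y i\<bar> + \<bar>z i - y i\<bar>"
    if "y \<in> unit_cube I" "z \<in> unit_cube I" "i \<in> I" "label y i \<noteq> label z i" for y z i
    using that maps[of y] maps[of z] by (auto simp: label_def unit_cube_def split: if_splits)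
  obtain \<delta> where "\<delta> > 0" and \<delta>: "\<And>x y i. x \<in> unit_cube I \<Longrightarrow> y \<in> unit_cube I \<Longrightarrow>
      \<forall>i\<in>I. \<bar>x i - y i\<bar> \<le> \<delta> \<Longrightarrow> i \<in> I \<Longrightarrow> \<bar>f x i - f y i\<bar> \<le> \<epsilon> / 5"
    using unif[of "\<epsilon> / 5"] \<open>\<epsilon> > 0\<close> by auto
  obtain p :: nat where "p > 0" and p: "inverse (real p) < min (\<delta> / 2) (\<epsilon> / 5)"
    using ex_inverse_of_nat_less[of "min (\<delta> / 2) (\<epsilon> / 5)"] \<open>\<delta> > 0\<close> \<open>\<epsilon> > 0\<close> by auto
  obtain x where "x \<in> unit_cube I" and adj: "\<And>i. i \<in> I \<Longrightarrow> \<exists>y z. y \<in> unit_cube I \<and> z \<in> unit_cube I \<and>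
      label y i \<noteq> label z i \<and> (\<forall>j\<in>I. \<bar>y j - x j\<bar> \<le> inverse p \<and> \<bar>z j - x j\<bar> \<le> inverse p)"
    by (rule kuhn_lemma_unit_cube[OF \<open>finite I\<close> \<open>p > 0\<close>, of label])
      (use maps in \<open>auto simp: label_def unit_cube_def\<close>)
  show ?thesis
  proof (rule that[OF \<open>x \<in> unit_cube I\<close>])
    fix i assume "i \<in> I"
    then obtain y z where "y \<in> unit_cube I" "z \<in> unit_cube I" "label y i \<noteq> label z i"
      and near: "\<forall>j\<in>I. \<bar>y j - x j\<bar> \<le> inverse p \<and> \<bar>z j - x j\<bar> \<le> inverse p"
      using adj by blast
    have "\<forall>j\<in>I. \<bar>x j - y j\<bar> \<le> \<delta>" "\<forall>j\<in>I. \<bar>z j - y j\<bar> \<le> \<delta>"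
      using near p by (auto simp: abs_le_iff)
    then have "\<bar>f x i - f y i\<bar> \<le> \<epsilon> / 5" "\<bar>f z i - f y i\<bar> \<le> \<epsilon> / 5"
      using \<delta> \<open>x \<in> unit_cube I\<close> \<open>y \<in> unit_cube I\<close> \<open>z \<in> unit_cube I\<close> \<open>i \<in> I\<close> by blast+
    moreover have "\<bar>y i - x i\<bar> \<le> \<epsilon> / 5" "\<bar>z i - x i\<bar> \<le> \<epsilon> / 5"
      using near \<open>i \<in> I\<close> p by (meson min_less_iff_conj order.trans less_imp_le)+
    moreover have "\<bar>f y i - y i\<bar> \<le> \<bar>f z i - f y i\<bar> + \<bar>z i - y i\<bar>"
      using label_gap \<open>y \<in> unit_cube I\<close> \<open>z \<in> unit_cube I\<close> \<open>i \<in> I\<close> \<open>label y i \<noteq> label z i\<close> by blast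
    ultimately show "\<bar>f x i - x i\<bar> \<le> \<epsilon>" by linarith
  qed
qed

(* Coordinate b of player e ranges over [-M, M] and is identified affinely with [0, 1]. *)
definition cube_encode :: "real \<Rightarrow> ('e \<Rightarrow> 'a::euclidean_space) \<Rightarrow> 'e \<times> 'a \<Rightarrow> real"
  where "cube_encode M z = (\<lambda>(e, b). (z e \<bullet> b / M + 1) / 2)"

definition cube_decode :: "real \<Rightarrow> ('e \<times> 'a \<Rightarrow> real) \<Rightarrow> 'e \<Rightarrow> 'a::euclidean_space"
  where "cube_decode M x e = (\<Sum>b\<in>Basis. ((2 * x (e, b) - 1) * M) *\<^sub>R b)"

lemma inner_cube_decode: "b \<in> Basis \<Longrightarrow> cube_decode M x e \<bullet> b = (2 * x (e, b) - 1) * M"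
  by (simp add: cube_decode_def)

lemma cube_decode_encode:
  assumes "M \<noteq> 0"
  shows "cube_decode M (cube_encode M z) e = z e"
proof -
  have "(2 * cube_encode M z (e, b) - 1) * M = z e \<bullet> b" for b
    using assms by (simp add: cube_encode_def field_simps)
  then show ?thesis by (simp add: cube_decode_def euclidean_representation)
qed

lemma cube_encode_in_unit_cube:
  fixes z :: "'e \<Rightarrow> 'a::euclidean_space"
  assumes "M > 0" "\<And>e. e \<in> E \<Longrightarrow> norm (z e) \<le> M"
  shows "cube_encode M z \<in> unit_cube (E \<times> Basis)"
  unfolding unit_cube_def
proof (intro CollectI ballI)
  fix i assume "i \<in> E \<times> (Basis :: 'a set)"
  then obtain e b where i: "i = (e, b)" "e \<in> E" "b \<in> Basis" by blast
  then have "\<bar>z e \<bullet> b\<bar> \<le> M"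
    using Basis_le_norm[of b "z e"] assms(2) by (meson order.trans)
  then show "0 \<le> cube_encode M z i \<and> cube_encode M z i \<le> 1"
    using \<open>M > 0\<close> by (simp add: i cube_encode_def field_simps abs_le_iff)
qed

lemma abs_cube_encode_diff_le:
  assumes "M > 0" "b \<in> Basis"
  shows "\<bar>cube_encode M z (e, b) - cube_encode M z' (e, b)\<bar> \<le> dist (z e) (z' e) / (2 * M)"
proof -
  have "\<bar>cube_encode M z (e, b) - cube_encode M z' (e, b)\<bar> = \<bar>(z e - z' e) \<bullet> b\<bar> / (2 * M)"
    using \<open>M > 0\<close> by (simp add: cube_encode_def inner_diff_left diff_divide_distrib[symmetric])
  also have "\<dots> \<le> dist (z e) (z' e) / (2 * M)"
    using Basis_le_norm[OF \<open>b \<in> Basis\<close>] \<open>M > 0\<close> by (simp add: dist_norm divide_right_mono)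
  finally show ?thesis .
qed

lemma norm_le_DIM_mult:
  fixes z :: "'a::euclidean_space" and c :: real
  assumes "\<And>b. b \<in> Basis \<Longrightarrow> \<bar>z \<bullet> b\<bar> \<le> c"
  shows "norm z \<le> DIM('a) * c"
proof -
  have "norm z \<le> (\<Sum>b\<in>Basis. \<bar>z \<bullet> b\<bar>)" by (rule norm_le_l1)
  also have "\<dots> \<le> (\<Sum>b\<in>(Basis::'a set). c)" using assms by (rule sum_mono)
  finally show ?thesis by simp
qed

lemma dist_cube_decode_le:
  fixes M \<delta> :: real
  assumes "M \<ge> 0" "\<And>b. b \<in> Basis \<Longrightarrow> \<bar>x (e, b) - y (e, b)\<bar> \<le> \<delta>"
  shows "dist (cube_decode M x e) (cube_decode M y e :: 'a::euclidean_space) \<le> DIM('a) * (2 * M * \<delta>)"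
  unfolding dist_norm
proof (rule norm_le_DIM_mult)
  fix b :: 'a assume "b \<in> Basis"
  then have "(cube_decode M x e - cube_decode M y e) \<bullet> b = 2 * M * (x (e, b) - y (e, b))"
    by (simp add: inner_cube_decode algebra_simps)
  then show "\<bar>(cube_decode M x e - cube_decode M y e) \<bullet> b\<bar> \<le> 2 * M * \<delta>"
    using assms \<open>b \<in> Basis\<close> by (simp add: abs_mult mult_left_mono)
qed

lemma dist_closest_point_le_twice:
  assumes "closed S" "y \<in> S"
  shows "dist y (closest_point S x) \<le> 2 * dist x y"
  using closest_point_le[OF assms, of x] dist_triangle[of y "closest_point S x" x]
  by (simp add: dist_commute)

definition cube_transport ::
  "real \<Rightarrow> 'a::euclidean_space set \<Rightarrow> ('e \<Rightarrow> ('e \<Rightarrow> 'a) \<Rightarrow> 'a) \<Rightarrow> ('e \<times> 'a \<Rightarrow> real) \<Rightarrow> 'e \<times> 'a \<Rightarrow> real"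
  where "cube_transport M W T x = cube_encode M (\<lambda>e. T e (\<lambda>q. closest_point W (cube_decode M x q)))"

lemma cube_transport_uniform:
  fixes T :: "'e \<Rightarrow> ('e \<Rightarrow> 'a::euclidean_space) \<Rightarrow> 'a"
  assumes "closed W" "convex W" "W \<noteq> {}" "M > 0"
    and unif: "\<And>\<epsilon>. \<epsilon> > 0 \<Longrightarrow> \<exists>\<delta>>0. \<forall>ws ws'.
                 (\<forall>q\<in>E. ws q \<in> W \<and> ws' q \<in> W \<and> dist (ws q) (ws' q) \<le> \<delta>) \<longrightarrow>
                 (\<forall>e\<in>E. dist (T e ws) (T e ws') \<le> \<epsilon>)"
    and "\<epsilon> > 0"
  shows "\<exists>\<delta>>0. \<forall>x\<in>unit_cube (E \<times> Basis). \<forall>y\<in>unit_cube (E \<times> Basis).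
           (\<forall>i\<in>E \<times> Basis. \<bar>x i - y i\<bar> \<le> \<delta>) \<longrightarrow>
           (\<forall>i\<in>E \<times> Basis. \<bar>cube_transport M W T x i - cube_transport M W T y i\<bar> \<le> \<epsilon>)"
proof -
  define D where "D = real DIM('a)"
  have "D > 0" by (simp add: D_def)
  define ws_of :: "('e \<times> 'a \<Rightarrow> real) \<Rightarrow> 'e \<Rightarrow> 'a" where "ws_of x q = closest_point W (cube_decode M x q)" for x q
  obtain \<delta> where "\<delta> > 0" and \<delta>: "\<And>ws ws' e. \<forall>q\<in>E. ws q \<in> W \<and> ws' q \<in> W \<and> dist (ws q) (ws' q) \<le> \<delta>
      \<Longrightarrow> e \<in> E \<Longrightarrow> dist (T e ws) (T e ws') \<le> 2 * M * \<epsilon>"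
    using unif[of "2 * M * \<epsilon>"] \<open>M > 0\<close> \<open>\<epsilon> > 0\<close> by auto
  have "\<bar>cube_transport M W T x i - cube_transport M W T y i\<bar> \<le> \<epsilon>"
    if close: "\<forall>i\<in>E \<times> Basis. \<bar>x i - y i\<bar> \<le> \<delta> / (2 * M * D)" and "i \<in> E \<times> Basis" for x y i
  proof -
    have "dist (ws_of x q) (ws_of y q) \<le> \<delta>" if "q \<in> E" for q
    proof -
      have "dist (ws_of x q) (ws_of y q) \<le> dist (cube_decode M x q) (cube_decode M y q)"
        unfolding ws_of_def using \<open>convex W\<close> \<open>closed W\<close> \<open>W \<noteq> {}\<close> by (rule closest_point_lipschitz)
      also have "\<dots> \<le> D * (2 * M * (\<delta> / (2 * M * D)))"
        unfolding D_def using close \<open>q \<in> E\<close> \<open>M > 0\<close> by (intro dist_cube_decode_le) (auto simp: D_def)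
      finally show ?thesis using \<open>M > 0\<close> \<open>D > 0\<close> by simp
    qed
    moreover have "ws_of u q \<in> W" for u q
      unfolding ws_of_def using \<open>closed W\<close> \<open>W \<noteq> {}\<close> by (rule closest_point_in_set)
    ultimately have T_close: "dist (T e (ws_of x)) (T e (ws_of y)) \<le> 2 * M * \<epsilon>" if "e \<in> E" for e
      using \<delta> that by blast
    obtain e b where i: "i = (e, b)" "e \<in> E" "b \<in> Basis" using \<open>i \<in> E \<times> Basis\<close> by blast
    have "\<bar>cube_transport M W T x i - cube_transport M W T y i\<bar>
        \<le> dist (T e (ws_of x)) (T e (ws_of y)) / (2 * M)"
      unfolding cube_transport_def ws_of_def[symmetric] i(1)
      by (rule abs_cube_encode_diff_le[OF \<open>M > 0\<close> \<open>b \<in> Basis\<close>])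
    also have "\<dots> \<le> \<epsilon>"
      using T_close[OF \<open>e \<in> E\<close>] \<open>M > 0\<close> by (simp add: pos_divide_le_eq mult.commute)
    finally show ?thesis .
  qed
  then show ?thesis using \<open>\<delta> > 0\<close> \<open>M > 0\<close> \<open>D > 0\<close> by (intro exI[of _ "\<delta> / (2 * M * D)"]) auto
qed

lemma approx_fixpoint_product:
  fixes T :: "'e \<Rightarrow> ('e \<Rightarrow> 'a::euclidean_space) \<Rightarrow> 'a"
  assumes "finite E" "compact W" "convex W" "W \<noteq> {}"
    and maps: "\<And>e ws. e \<in> E \<Longrightarrow> \<forall>q\<in>E. ws q \<in> W \<Longrightarrow> T e ws \<in> W"
    and unif: "\<And>\<epsilon>. \<epsilon> > 0 \<Longrightarrow> \<exists>\<delta>>0. \<forall>ws ws'.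
                 (\<forall>q\<in>E. ws q \<in> W \<and> ws' q \<in> W \<and> dist (ws q) (ws' q) \<le> \<delta>) \<longrightarrow>
                 (\<forall>e\<in>E. dist (T e ws) (T e ws') \<le> \<epsilon>)"
    and "\<epsilon> > 0"
  obtains ws where "\<forall>q\<in>E. ws q \<in> W" "\<And>e. e \<in> E \<Longrightarrow> dist (T e ws) (ws e) \<le> \<epsilon>"
proof -
  obtain M where "M > 0" and M: "\<And>w. w \<in> W \<Longrightarrow> norm w \<le> M"
    using compact_imp_bounded[OF \<open>compact W\<close>] by (auto simp: bounded_pos)
  define D where "D = real DIM('a)"
  have "D > 0" by (simp add: D_def)
  have "closed W" using \<open>compact W\<close> by (rule compact_imp_closed)
  define ws_of :: "('e \<times> 'a \<Rightarrow> real) \<Rightarrow> 'e \<Rightarrow> 'a" where "ws_of x q = closest_point W (cube_decode M x q)" for x q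
  have ws_of_W: "ws_of x q \<in> W" for x q
    unfolding ws_of_def using \<open>closed W\<close> \<open>W \<noteq> {}\<close> by (rule closest_point_in_set)
  have F: "cube_transport M W T x = cube_encode M (\<lambda>e. T e (ws_of x))" for x
    by (simp add: cube_transport_def ws_of_def[abs_def])
  have "cube_transport M W T x \<in> unit_cube (E \<times> Basis)" for x
    unfolding F using \<open>M > 0\<close> M maps ws_of_W by (intro cube_encode_in_unit_cube) auto
  moreover have "finite (E \<times> (Basis :: 'a set))" using \<open>finite E\<close> by simp
  moreover have "\<epsilon> / (4 * M * D) > 0" using \<open>\<epsilon> > 0\<close> \<open>M > 0\<close> \<open>D > 0\<close> by simp
  ultimately obtain x where fix_x: "\<And>i. i \<in> E \<times> Basis \<Longrightarrow> \<bar>cube_transport M W T x i - x i\<bar> \<le> \<epsilon> / (4 * M * D)"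
    using approx_fixpoint_unit_cube[of "E \<times> Basis" "cube_transport M W T",
        OF _ _ cube_transport_uniform[OF \<open>closed W\<close> \<open>convex W\<close> \<open>W \<noteq> {}\<close> \<open>M > 0\<close> unif]]
    by blast
  show ?thesis
  proof (rule that)
    show "\<forall>q\<in>E. ws_of x q \<in> W" using ws_of_W by blast
    fix e assume "e \<in> E"
    have "dist (cube_decode M (cube_transport M W T x) e) (cube_decode M x e) \<le> D * (2 * M * (\<epsilon> / (4 * M * D)))"
      unfolding D_def using fix_x \<open>e \<in> E\<close> \<open>M > 0\<close> by (intro dist_cube_decode_le) (auto simp: D_def)
    moreover have "cube_decode M (cube_transport M W T x) e = T e (ws_of x)"
      using \<open>M > 0\<close> by (simp add: F cube_decode_encode)
    moreover have "T e (ws_of x) \<in> W" using maps[OF \<open>e \<in> E\<close>] ws_of_W by blast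
    ultimately show "dist (T e (ws_of x)) (ws_of x e) \<le> \<epsilon>"
      using dist_closest_point_le_twice[OF \<open>closed W\<close>, of "T e (ws_of x)" "cube_decode M x e"]
        \<open>M > 0\<close> \<open>D > 0\<close> by (simp add: ws_of_def dist_commute)
  qed
qed

lemma continuous_on_Min_image:
  fixes h :: "'b \<Rightarrow> 'a::topological_space \<Rightarrow> real"
  assumes "finite G" "G \<noteq> {}" "\<And>g. g \<in> G \<Longrightarrow> continuous_on S (h g)"
  shows "continuous_on S (\<lambda>s. Min ((\<lambda>g. h g s) ` G))"
  using assms
proof (induction G rule: finite_ne_induct)
  case (singleton g)
  then show ?case by simp
next
  case (insert g G)
  then have "continuous_on S (\<lambda>s. min (h g s) (Min ((\<lambda>g. h g s) ` G)))"
    by (intro continuous_on_min) auto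
  with insert show ?case by simp
qed

lemma continuous_softmin_selection:
  fixes f :: "'a::topological_space \<Rightarrow> 'b::real_normed_vector \<Rightarrow> real"
  assumes "finite G" "G \<noteq> {}" "G \<subseteq> W" "convex W" "\<kappa> > 0"
    and cont: "\<And>g. g \<in> G \<Longrightarrow> continuous_on S (\<lambda>s. f s g)"
    and conv: "\<And>s. s \<in> S \<Longrightarrow> convex_on W (f s)"
  obtains \<phi> where "continuous_on S \<phi>" "\<And>s. \<phi> s \<in> W"
    "\<And>s g. s \<in> S \<Longrightarrow> g \<in> G \<Longrightarrow> f s (\<phi> s) \<le> f s g + \<kappa>"
proof -
  define m where "m s = Min ((\<lambda>g. f s g) ` G)" for s
  (* Only net points within \<kappa> of the minimum get positive weight and a minimising one gets
     weight \<kappa>; so the weights depend continuously on s and their total never drops below \<kappa>. *)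
  define wt where "wt s g = max 0 (m s + \<kappa> - f s g)" for s g
  define tot where "tot s = (\<Sum>g\<in>G. wt s g)" for s
  have m_le: "m s \<le> f s g" if "g \<in> G" for s g
    using \<open>finite G\<close> that by (simp add: m_def)
  have "tot s \<ge> \<kappa>" for s
  proof -
    have "m s \<in> (\<lambda>g. f s g) ` G"
      unfolding m_def using \<open>finite G\<close> \<open>G \<noteq> {}\<close> by (intro Min_in) auto
    then obtain g0 where "g0 \<in> G" "m s = f s g0" by auto
    then have "wt s g0 = \<kappa>" using \<open>\<kappa> > 0\<close> by (simp add: wt_def)
    moreover have "wt s g0 \<le> tot s"
      unfolding tot_def using \<open>finite G\<close> \<open>g0 \<in> G\<close> by (intro member_le_sum) (auto simp: wt_def)
    ultimately show ?thesis by simp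
  qed
  then have tot_pos: "tot s > 0" for s
    using \<open>\<kappa> > 0\<close> by (meson less_le_trans)
  have weights_nonneg: "wt s g / tot s \<ge> 0" for s g
    using tot_pos[of s] by (simp add: wt_def)
  have weights_sum: "(\<Sum>g\<in>G. wt s g / tot s) = 1" for s
    using tot_pos[of s] by (simp add: tot_def sum_divide_distrib[symmetric])
  show ?thesis
  proof
    have "continuous_on S m"
      unfolding m_def using \<open>finite G\<close> \<open>G \<noteq> {}\<close> cont by (rule continuous_on_Min_image)
    then have "\<And>g. g \<in> G \<Longrightarrow> continuous_on S (\<lambda>s. wt s g)" "continuous_on S tot"
      unfolding tot_def wt_def using cont by (auto intro!: continuous_intros)
    then show "continuous_on S (\<lambda>s. \<Sum>g\<in>G. (wt s g / tot s) *\<^sub>R g)"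
      using tot_pos by (intro continuous_intros) (auto simp: less_imp_neq[symmetric])
  next
    fix s
    show "(\<Sum>g\<in>G. (wt s g / tot s) *\<^sub>R g) \<in> W"
      using \<open>G \<subseteq> W\<close> weights_nonneg weights_sum by (intro convex_sum[OF \<open>finite G\<close> \<open>convex W\<close>]) auto
    fix g assume "s \<in> S" "g \<in> G"
    have "f s (\<Sum>g\<in>G. (wt s g / tot s) *\<^sub>R g) \<le> (\<Sum>g\<in>G. (wt s g / tot s) * f s g)"
      using \<open>G \<subseteq> W\<close> weights_nonneg weights_sum
      by (intro convex_on_sum[OF \<open>finite G\<close> \<open>G \<noteq> {}\<close> conv[OF \<open>s \<in> S\<close>]]) auto
    also have "\<dots> \<le> (\<Sum>g\<in>G. (wt s g / tot s) * (m s + \<kappa>))"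
    proof (rule sum_mono)
      fix g
      show "(wt s g / tot s) * f s g \<le> (wt s g / tot s) * (m s + \<kappa>)"
      proof (cases "f s g \<le> m s + \<kappa>")
        case True
        then show ?thesis using weights_nonneg by (rule mult_left_mono)
      next
        case False
        then show ?thesis by (simp add: wt_def)
      qed
    qed
    also have "\<dots> = m s + \<kappa>"
      using weights_sum[of s] by (simp only: sum_distrib_right[symmetric] mult_1)
    also have "\<dots> \<le> f s g + \<kappa>"
      using m_le[OF \<open>g \<in> G\<close>] by simp
    finally show "f s (\<Sum>g\<in>G. (wt s g / tot s) *\<^sub>R g) \<le> f s g + \<kappa>" .
  qed
qed

lemma continuous_approx_argmin:
  fixes f :: "'a::metric_space \<Rightarrow> 'b::real_normed_vector \<Rightarrow> real"
  assumes "compact S" "compact W" "convex W" "W \<noteq> {}" "\<eta> > 0"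
    and cont: "continuous_on (S \<times> W) (\<lambda>(s, v). f s v)"
    and conv: "\<And>s. s \<in> S \<Longrightarrow> convex_on W (f s)"
  obtains \<phi> where "continuous_on S \<phi>" "\<And>s. \<phi> s \<in> W"
    "\<And>s v. s \<in> S \<Longrightarrow> v \<in> W \<Longrightarrow> f s (\<phi> s) \<le> f s v + \<eta>"
proof -
  have "uniformly_continuous_on (S \<times> W) (\<lambda>(s, v). f s v)"
    using cont compact_Times[OF \<open>compact S\<close> \<open>compact W\<close>] by (rule compact_uniformly_continuous)
  then obtain d where "d > 0" and d: "\<And>p p'. p \<in> S \<times> W \<Longrightarrow> p' \<in> S \<times> W \<Longrightarrow> dist p' p < d \<Longrightarrow>
      dist ((\<lambda>(s, v). f s v) p') ((\<lambda>(s, v). f s v) p) < \<eta> / 2"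
    unfolding uniformly_continuous_on_def using \<open>\<eta> > 0\<close> by (metis half_gt_zero)
  have f_close: "f s g < f s v + \<eta> / 2" if "s \<in> S" "v \<in> W" "g \<in> W" "dist g v < d" for s v g
  proof -
    have "\<bar>f s g - f s v\<bar> < \<eta> / 2"
      using d[of "(s, v)" "(s, g)"] that by (auto simp: dist_Pair_Pair dist_real_def)
    then show ?thesis by linarith
  qed
  obtain G where "finite G" "G \<subseteq> W" and net: "W \<subseteq> (\<Union>g\<in>G. ball g d)"
    using compactE_image[OF \<open>compact W\<close>, of W "\<lambda>g. ball g d"] \<open>d > 0\<close> by force
  moreover have "G \<noteq> {}" using net \<open>W \<noteq> {}\<close> by auto
  moreover have "continuous_on S (\<lambda>s. f s g)" if "g \<in> W" for g
  proof -
    have "continuous_on S (\<lambda>s. (\<lambda>(s, v). f s v) (s, g))"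
      using that by (intro continuous_on_compose2[OF cont]) (auto intro!: continuous_intros)
    then show ?thesis by simp
  qed
  moreover have "\<eta> / 2 > 0" using \<open>\<eta> > 0\<close> by simp
  ultimately obtain \<phi> where "continuous_on S \<phi>" "\<And>s. \<phi> s \<in> W"
    and \<phi>: "\<And>s g. s \<in> S \<Longrightarrow> g \<in> G \<Longrightarrow> f s (\<phi> s) \<le> f s g + \<eta> / 2"
    using continuous_softmin_selection[of G W "\<eta> / 2" S f] \<open>convex W\<close> conv by blast
  moreover have "f s (\<phi> s) \<le> f s v + \<eta>" if "s \<in> S" "v \<in> W" for s v
  proof -
    obtain g where "g \<in> G" "dist g v < d" using net \<open>v \<in> W\<close> by (auto simp: dist_commute)
    then show ?thesis
      using \<phi>[OF \<open>s \<in> S\<close> \<open>g \<in> G\<close>] f_close[OF that] \<open>G \<subseteq> W\<close> by fastforce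
  qed
  ultimately show ?thesis using that by blast
qed

lemma uniformly_continuous_on_finite_family:
  assumes "finite E" "\<And>e. e \<in> E \<Longrightarrow> uniformly_continuous_on S (f e)" "\<epsilon> > 0"
  obtains \<delta> where "\<delta> > 0"
    "\<And>e x y. e \<in> E \<Longrightarrow> x \<in> S \<Longrightarrow> y \<in> S \<Longrightarrow> dist x y < \<delta> \<Longrightarrow> dist (f e x) (f e y) < \<epsilon>"
proof -
  have "\<forall>\<^sub>F \<delta> in at_right 0. \<forall>x\<in>S. \<forall>y\<in>S. dist x y < \<delta> \<longrightarrow> dist (f e x) (f e y) < \<epsilon>"
    if e: "e \<in> E" for e
  proof -
    obtain d where "d > 0" "\<forall>x\<in>S. \<forall>y\<in>S. dist y x < d \<longrightarrow> dist (f e y) (f e x) < \<epsilon>"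
      using assms(2)[OF e] \<open>\<epsilon> > 0\<close> unfolding uniformly_continuous_on_def by metis
    then show ?thesis
      unfolding eventually_at_right_field by (metis order.strict_trans)
  qed
  then have "\<forall>\<^sub>F \<delta> in at_right 0. \<forall>e\<in>E. \<forall>x\<in>S. \<forall>y\<in>S. dist x y < \<delta> \<longrightarrow> dist (f e x) (f e y) < \<epsilon>"
    using \<open>finite E\<close> by (intro eventually_ball_finite) auto
  then obtain \<delta> where "\<delta> > 0" "\<forall>e\<in>E. \<forall>x\<in>S. \<forall>y\<in>S. dist x y < \<delta> \<longrightarrow> dist (f e x) (f e y) < \<epsilon>"
    unfolding eventually_at_right_field by (metis field_lbound_gt_zero)
  then show ?thesis using that by blast
qed

lemma seq_compact_finite_family:
  fixes X :: "nat \<Rightarrow> 'e \<Rightarrow> 'a::metric_space"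
  assumes "finite E" "compact W" "\<And>k q. q \<in> E \<Longrightarrow> X k q \<in> W"
  obtains L r where "strict_mono r" "\<And>q. q \<in> E \<Longrightarrow> L q \<in> W"
    "\<And>q. q \<in> E \<Longrightarrow> (\<lambda>k. X (r k) q) \<longlonglongrightarrow> L q"
proof -
  have "\<exists>L r. strict_mono r \<and> (\<forall>q\<in>E. L q \<in> W \<and> (\<lambda>k. X (r k) q) \<longlonglongrightarrow> L q)"
    using assms(1,3)
  proof (induction E rule: finite_induct)
    case empty
    show ?case by (auto intro: strict_mono_id)
  next
    case (insert a F)
    then obtain L r where r: "strict_mono r" "\<forall>q\<in>F. L q \<in> W \<and> (\<lambda>k. X (r k) q) \<longlonglongrightarrow> L q"
      by blast
    have "\<forall>k. X (r k) a \<in> W" using insert.prems by simp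
    then obtain La r' where "La \<in> W" "strict_mono r'" "((\<lambda>k. X (r k) a) \<circ> r') \<longlonglongrightarrow> La"
      using seq_compactE[OF compact_imp_seq_compact[OF \<open>compact W\<close>]] by metis
    moreover have "((\<lambda>k. X (r k) q) \<circ> r') \<longlonglongrightarrow> L q" if "q \<in> F" for q
      using LIMSEQ_subseq_LIMSEQ \<open>strict_mono r'\<close> r(2) that by blast
    ultimately show ?case
      using r strict_mono_o[OF r(1) \<open>strict_mono r'\<close>]
      by (intro exI[of _ "L(a := La)"] exI[of _ "r \<circ> r'"]) (auto simp: o_def)
  qed
  then show ?thesis using that by blast
qed

lemma convex_on_comp_affine:
  fixes f :: "'a::real_vector \<Rightarrow> real"
  assumes "convex_on UNIV f" "convex S"
  shows "convex_on S (\<lambda>v. f (a + c *\<^sub>R v))"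
proof (rule convex_onI)
  fix t :: real and x y :: 'a assume "0 < t" "t < 1"
  have "a + c *\<^sub>R ((1 - t) *\<^sub>R x + t *\<^sub>R y) = (1 - t) *\<^sub>R (a + c *\<^sub>R x) + t *\<^sub>R (a + c *\<^sub>R y)"
    by (simp add: algebra_simps)
  then show "f (a + c *\<^sub>R ((1 - t) *\<^sub>R x + t *\<^sub>R y)) \<le> (1 - t) * f (a + c *\<^sub>R x) + t * f (a + c *\<^sub>R y)"
    using convex_onD[OF assms(1), of t "a + c *\<^sub>R x" "a + c *\<^sub>R y"] \<open>0 < t\<close> \<open>t < 1\<close> by simp
qed (rule assms(2))

lemma approx_best_responses:
  fixes R :: "'e \<Rightarrow> 'a::euclidean_space \<Rightarrow> real"
  assumes conv: "\<And>e. e \<in> E \<Longrightarrow> convex_on UNIV (R e)" and "compact W" "convex W" "W \<noteq> {}" "\<eta> > 0"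
  obtains \<phi> where "\<And>e. e \<in> E \<Longrightarrow> continuous_on (cball 0 M) (\<phi> e)" "\<And>e s. e \<in> E \<Longrightarrow> \<phi> e s \<in> W"
    "\<And>e s v. e \<in> E \<Longrightarrow> s \<in> cball 0 M \<Longrightarrow> v \<in> W \<Longrightarrow> R e (s + c *\<^sub>R \<phi> e s) \<le> R e (s + c *\<^sub>R v) + \<eta>"
proof -
  have "\<exists>\<phi>. continuous_on (cball 0 M) \<phi> \<and> (\<forall>s. \<phi> s \<in> W) \<and>
      (\<forall>s\<in>cball 0 M. \<forall>v\<in>W. R e (s + c *\<^sub>R \<phi> s) \<le> R e (s + c *\<^sub>R v) + \<eta>)" if "e \<in> E" for e
  proof -
    have "continuous_on UNIV (R e)"
      using convex_on_continuous[OF open_UNIV conv[OF that]] .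
    then have "continuous_on (cball 0 M \<times> W) (\<lambda>p. R e (fst p + c *\<^sub>R snd p))"
      by (rule continuous_on_compose2) (auto intro!: continuous_intros)
    then have "continuous_on (cball 0 M \<times> W) (\<lambda>(s, v). R e (s + c *\<^sub>R v))"
      by (simp add: case_prod_beta)
    moreover have "convex_on W (\<lambda>v. R e (s + c *\<^sub>R v))" for s
      using conv[OF that] \<open>convex W\<close> by (rule convex_on_comp_affine)
    ultimately obtain \<phi> where "continuous_on (cball 0 M) \<phi>" "\<And>s. \<phi> s \<in> W"
      "\<And>s v. s \<in> cball 0 M \<Longrightarrow> v \<in> W \<Longrightarrow> R e (s + c *\<^sub>R \<phi> s) \<le> R e (s + c *\<^sub>R v) + \<eta>"
      using continuous_approx_argmin[OF compact_cball \<open>compact W\<close> \<open>convex W\<close> \<open>W \<noteq> {}\<close> \<open>\<eta> > 0\<close>]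
      by blast
    then show ?thesis by blast
  qed
  then have "\<exists>\<phi>. \<forall>e\<in>E. continuous_on (cball 0 M) (\<phi> e) \<and> (\<forall>s. \<phi> e s \<in> W) \<and>
      (\<forall>s\<in>cball 0 M. \<forall>v\<in>W. R e (s + c *\<^sub>R \<phi> e s) \<le> R e (s + c *\<^sub>R v) + \<eta>)"
    by (intro bchoice) blast
  then show ?thesis using that by blast
qed

lemma w_av_fun_upd:
  assumes "finite E" "e \<in> E"
  shows "w_av E (ws(e := v)) = w_av E (ws(e := 0)) + (1 / real (card E)) *\<^sub>R v"
proof -
  have "(\<Sum>q\<in>E. (ws(e := v)) q) = v + (\<Sum>q\<in>E - {e}. ws q)"
    "(\<Sum>q\<in>E. (ws(e := 0)) q) = (\<Sum>q\<in>E - {e}. ws q)"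
    using assms by (simp_all add: sum.remove)
  then show ?thesis by (simp add: w_av_def scaleR_add_right)
qed

lemma norm_w_av_diff_le:
  assumes "finite E" "E \<noteq> {}" "\<And>q. q \<in> E \<Longrightarrow> norm (a q - b q) \<le> c"
  shows "norm (w_av E a - w_av E b) \<le> c"
proof -
  have "w_av E a - w_av E b = (1 / real (card E)) *\<^sub>R (\<Sum>q\<in>E. a q - b q)"
    by (simp add: w_av_def sum_subtractf scaleR_diff_right)
  also have "norm \<dots> = norm (\<Sum>q\<in>E. a q - b q) / real (card E)"
    by simp
  also have "\<dots> \<le> (\<Sum>q\<in>E. c) / real (card E)"
    using norm_sum[of "\<lambda>q. a q - b q" E] sum_mono[of E "\<lambda>q. norm (a q - b q)" "\<lambda>_. c"] assms(3)
    by (intro divide_right_mono) auto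
  also have "\<dots> = c" using assms(1,2) by simp
  finally show ?thesis .
qed

lemma norm_w_av_le:
  assumes "finite E" "E \<noteq> {}" "\<And>q. q \<in> E \<Longrightarrow> norm (a q) \<le> c"
  shows "norm (w_av E a) \<le> c"
  using norm_w_av_diff_le[OF assms(1,2), of a "\<lambda>_. 0"] assms(3) by (simp add: w_av_def)

lemma w_av_others_in_cball:
  assumes "finite E" "E \<noteq> {}" "M \<ge> 0" "\<And>q. q \<in> E \<Longrightarrow> norm (ws q) \<le> M"
  shows "w_av E (ws(e := 0)) \<in> cball 0 M"
  using assms by (auto intro!: norm_w_av_le)

lemma uniformly_continuous_response_to_others:
  fixes \<phi> :: "'e \<Rightarrow> real^'d \<Rightarrow> real^'d"
  assumes "finite E" "E \<noteq> {}" "M \<ge> 0" "\<And>w. w \<in> W \<Longrightarrow> norm w \<le> M"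
    and cont: "\<And>e. e \<in> E \<Longrightarrow> continuous_on (cball 0 M) (\<phi> e)" and "\<epsilon> > 0"
  shows "\<exists>\<delta>>0. \<forall>ws ws'. (\<forall>q\<in>E. ws q \<in> W \<and> ws' q \<in> W \<and> dist (ws q) (ws' q) \<le> \<delta>) \<longrightarrow>
           (\<forall>e\<in>E. dist (\<phi> e (w_av E (ws(e := 0)))) (\<phi> e (w_av E (ws'(e := 0))))  \<le> \<epsilon>)"
proof -
  obtain d where "d > 0" and d: "\<And>e x y. e \<in> E \<Longrightarrow> x \<in> cball 0 M \<Longrightarrow> y \<in> cball 0 M \<Longrightarrow>
      dist x y < d \<Longrightarrow> dist (\<phi> e x) (\<phi> e y) < \<epsilon>"
    using uniformly_continuous_on_finite_family[OF \<open>finite E\<close>, of "cball 0 M" \<phi> \<epsilon>] \<open>\<epsilon> > 0\<close>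
      compact_uniformly_continuous[OF cont compact_cball] by auto
  have "dist (\<phi> e (w_av E (ws(e := 0)))) (\<phi> e (w_av E (ws'(e := 0)))) \<le> \<epsilon>"
    if close: "\<forall>q\<in>E. ws q \<in> W \<and> ws' q \<in> W \<and> dist (ws q) (ws' q) \<le> d / 2" and "e \<in> E" for ws ws' e
  proof -
    have "norm (w_av E (ws(e := 0)) - w_av E (ws'(e := 0))) \<le> d / 2"
      using close \<open>d > 0\<close> by (intro norm_w_av_diff_le[OF \<open>finite E\<close> \<open>E \<noteq> {}\<close>]) (auto simp: dist_norm)
    moreover have "w_av E (u(e := 0)) \<in> cball 0 M" if "\<forall>q\<in>E. u q \<in> W" for u
      using that assms(4) by (intro w_av_others_in_cball[OF \<open>finite E\<close> \<open>E \<noteq> {}\<close> \<open>M \<ge> 0\<close>]) auto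
    ultimately show ?thesis
      using d[OF \<open>e \<in> E\<close>] close \<open>d > 0\<close> by (fastforce simp: dist_norm intro: less_imp_le)
  qed
  then show ?thesis using \<open>d > 0\<close> by (intro exI[of _ "d / 2"]) auto
qed

definition ens_eps_NE ::
  "'e set \<Rightarrow> ('e \<Rightarrow> real^'d \<Rightarrow> real) \<Rightarrow> (real^'d) set \<Rightarrow> real \<Rightarrow> ('e \<Rightarrow> real^'d) \<Rightarrow> bool"
  where "ens_eps_NE E R W \<eta> ws \<longleftrightarrow> (\<forall>q\<in>E. ws q \<in> W) \<and>
     (\<forall>e\<in>E. \<forall>v\<in>W. R e (w_av E ws) \<le> R e (w_av E (ws(e := v))) + \<eta>)"

lemma ens_eps_NE_if_near_responses:
  fixes R :: "'e \<Rightarrow> real^'d \<Rightarrow> real" and \<phi> :: "'e \<Rightarrow> real^'d \<Rightarrow> real^'d"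
  assumes "finite E" "E \<noteq> {}" "M \<ge> 0" and M: "\<And>w. w \<in> W \<Longrightarrow> norm w \<le> M"
    and R_close: "\<And>e x y. e \<in> E \<Longrightarrow> x \<in> cball 0 (2 * M) \<Longrightarrow> y \<in> cball 0 (2 * M) \<Longrightarrow>
      dist x y < \<delta> \<Longrightarrow> dist (R e x) (R e y) < \<eta> / 2"
    and \<phi>_W: "\<And>e s. e \<in> E \<Longrightarrow> \<phi> e s \<in> W"
    and \<phi>_min: "\<And>e s v. e \<in> E \<Longrightarrow> s \<in> cball 0 M \<Longrightarrow> v \<in> W \<Longrightarrow>
      R e (s + (1 / real (card E)) *\<^sub>R \<phi> e s) \<le> R e (s + (1 / real (card E)) *\<^sub>R v) + \<eta> / 2"
    and ws_W: "\<forall>q\<in>E. ws q \<in> W"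
    and near: "\<And>e. e \<in> E \<Longrightarrow> dist (ws e) (\<phi> e (w_av E (ws(e := 0)))) < \<delta>"
  shows "ens_eps_NE E R W \<eta> ws"
proof -
  define N where "N = real (card E)"
  have "N \<ge> 1" using \<open>finite E\<close> \<open>E \<noteq> {}\<close> by (simp add: N_def Suc_leI card_gt_0_iff)
  have shifted: "s + (1 / N) *\<^sub>R w \<in> cball 0 (2 * M)" if "s \<in> cball 0 M" "w \<in> W" for s w
  proof -
    have "norm ((1 / N) *\<^sub>R w) = norm w / N" using \<open>N \<ge> 1\<close> by simp
    also have "\<dots> \<le> norm w" using \<open>N \<ge> 1\<close> by (simp add: divide_le_eq mult_le_cancel_left1)
    finally have "norm ((1 / N) *\<^sub>R w) \<le> M" using M[OF \<open>w \<in> W\<close>] by linarith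
    then show ?thesis using that norm_triangle_ineq[of s "(1 / N) *\<^sub>R w"] by simp
  qed
  have "R e (w_av E ws) \<le> R e (w_av E (ws(e := v))) + \<eta>" if "e \<in> E" "v \<in> W" for e v
  proof -
    define s where "s = w_av E (ws(e := 0))"
    define u where "u = \<phi> e s"
    have avg: "w_av E (ws(e := w)) = s + (1 / N) *\<^sub>R w" for w
      unfolding s_def N_def by (rule w_av_fun_upd[OF \<open>finite E\<close> \<open>e \<in> E\<close>])
    have "s \<in> cball 0 M"
      unfolding s_def using ws_W M by (intro w_av_others_in_cball[OF \<open>finite E\<close> \<open>E \<noteq> {}\<close> \<open>M \<ge> 0\<close>]) auto
    have "(s + (1 / N) *\<^sub>R ws e) - (s + (1 / N) *\<^sub>R u) = (1 / N) *\<^sub>R (ws e - u)"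
      by (simp add: algebra_simps)
    then have "dist (s + (1 / N) *\<^sub>R ws e) (s + (1 / N) *\<^sub>R u) = dist (ws e) u / N"
      using \<open>N \<ge> 1\<close> by (simp add: dist_norm)
    also have "\<dots> \<le> dist (ws e) u"
      using \<open>N \<ge> 1\<close> by (simp add: divide_le_eq mult_le_cancel_left1)
    also have "\<dots> < \<delta>"
      using near[OF \<open>e \<in> E\<close>] by (simp add: u_def s_def)
    finally have "dist (R e (s + (1 / N) *\<^sub>R ws e)) (R e (s + (1 / N) *\<^sub>R u)) < \<eta> / 2"
      using R_close[OF \<open>e \<in> E\<close> shifted shifted] \<open>s \<in> cball 0 M\<close> ws_W \<phi>_W \<open>e \<in> E\<close> by (simp add: u_def)
    then have "R e (s + (1 / N) *\<^sub>R ws e) < R e (s + (1 / N) *\<^sub>R u) + \<eta> / 2"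
      unfolding dist_real_def by linarith
    also have "\<dots> \<le> R e (s + (1 / N) *\<^sub>R v) + \<eta>"
      using \<phi>_min[OF \<open>e \<in> E\<close> \<open>s \<in> cball 0 M\<close> \<open>v \<in> W\<close>] by (simp add: u_def N_def)
    finally show ?thesis using avg[of "ws e"] avg[of v] by simp
  qed
  then show ?thesis using ws_W unfolding ens_eps_NE_def by blast
qed

lemma ens_eps_NE_exists:
  fixes R :: "'e \<Rightarrow> real^'d \<Rightarrow> real"
  assumes "finite E" "E \<noteq> {}" "compact W" "convex W" "W \<noteq> {}"
    and conv: "\<And>e. e \<in> E \<Longrightarrow> convex_on UNIV (R e)" and "\<eta> > 0"
  shows "\<exists>ws. ens_eps_NE E R W \<eta> ws"
proof -
  obtain M where "M > 0" and M: "\<And>w. w \<in> W \<Longrightarrow> norm w \<le> M"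
    using compact_imp_bounded[OF \<open>compact W\<close>] by (auto simp: bounded_pos)
  have R_unif: "uniformly_continuous_on (cball 0 (2 * M)) (R e)" if "e \<in> E" for e
  proof -
    have "continuous_on UNIV (R e)"
      using convex_on_continuous[OF open_UNIV conv[OF that]] .
    then show ?thesis
      by (meson compact_cball compact_uniformly_continuous continuous_on_subset subset_UNIV)
  qed
  have "\<eta> / 2 > 0" using \<open>\<eta> > 0\<close> by simp
  obtain \<delta> where "\<delta> > 0" and \<delta>: "\<And>e x y. e \<in> E \<Longrightarrow> x \<in> cball 0 (2 * M) \<Longrightarrow> y \<in> cball 0 (2 * M) \<Longrightarrow>
      dist x y < \<delta> \<Longrightarrow> dist (R e x) (R e y) < \<eta> / 2"
    using uniformly_continuous_on_finite_family[OF \<open>finite E\<close>, of "cball 0 (2 * M)" R "\<eta> / 2"]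
      R_unif \<open>\<eta> / 2 > 0\<close> by auto
  obtain \<phi> where \<phi>_cont: "\<And>e. e \<in> E \<Longrightarrow> continuous_on (cball 0 M) (\<phi> e)"
    and \<phi>_W: "\<And>e s. e \<in> E \<Longrightarrow> \<phi> e s \<in> W"
    and \<phi>_min: "\<And>e s v. e \<in> E \<Longrightarrow> s \<in> cball 0 M \<Longrightarrow> v \<in> W \<Longrightarrow>
       R e (s + (1 / real (card E)) *\<^sub>R \<phi> e s) \<le> R e (s + (1 / real (card E)) *\<^sub>R v) + \<eta> / 2"
    by (rule approx_best_responses[where E = E and R = R and M = M and c = "1 / real (card E)",
          OF conv \<open>compact W\<close> \<open>convex W\<close> \<open>W \<noteq> {}\<close> \<open>\<eta> / 2 > 0\<close>]) blast+
  (* The average with the entry of player e set to 0 is the part of w_av E ws that player e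
     does not control. *)
  define T where "T e ws = \<phi> e (w_av E (ws(e := 0)))" for e ws
  have T_W: "T e ws \<in> W" if "e \<in> E" for e ws
    unfolding T_def using \<phi>_W[OF that] .
  have T_unif: "\<exists>\<delta>'>0. \<forall>ws ws'. (\<forall>q\<in>E. ws q \<in> W \<and> ws' q \<in> W \<and> dist (ws q) (ws' q) \<le> \<delta>') \<longrightarrow>
      (\<forall>e\<in>E. dist (T e ws) (T e ws') \<le> \<epsilon>)" if "\<epsilon> > 0" for \<epsilon>
    unfolding T_def using \<open>M > 0\<close>
    by (intro uniformly_continuous_response_to_others[OF \<open>finite E\<close> \<open>E \<noteq> {}\<close> _ M \<phi>_cont that]) simp
  have "\<delta> / 2 > 0" using \<open>\<delta> > 0\<close> by simp
  then obtain ws where ws_W: "\<forall>q\<in>E. ws q \<in> W" and ws_fix: "\<And>e. e \<in> E \<Longrightarrow> dist (T e ws) (ws e) \<le> \<delta> / 2"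
    using approx_fixpoint_product[OF \<open>finite E\<close> \<open>compact W\<close> \<open>convex W\<close> \<open>W \<noteq> {}\<close> T_W T_unif] by blast
  have "dist (ws e) (\<phi> e (w_av E (ws(e := 0)))) < \<delta>" if "e \<in> E" for e
    using ws_fix[OF that] \<open>\<delta> > 0\<close> by (simp add: T_def dist_commute)
  then have "ens_eps_NE E R W \<eta> ws"
    using \<open>finite E\<close> \<open>E \<noteq> {}\<close> \<open>M > 0\<close> M \<delta> \<phi>_W \<phi>_min ws_W
    by (intro ens_eps_NE_if_near_responses[where M = M and \<delta> = \<delta> and \<phi> = \<phi>]) auto
  then show ?thesis by blast
qed

lemma ens_NE_exists:
  fixes R :: "'e \<Rightarrow> real^'d \<Rightarrow> real"
  assumes "finite E" "compact W" "convex W" "W \<noteq> {}"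
    and conv: "\<And>e. e \<in> E \<Longrightarrow> convex_on UNIV (R e)"
  shows "\<exists>ws. ens_eps_NE E R W 0 ws"
proof (cases "E = {}")
  case True
  then show ?thesis by (simp add: ens_eps_NE_def)
next
  case False
  have "\<forall>k. \<exists>ws. ens_eps_NE E R W (inverse (real (Suc k))) ws"
    using ens_eps_NE_exists[OF assms(1) False assms(2-4) conv] by simp
  then obtain X where X: "\<And>k. ens_eps_NE E R W (inverse (real (Suc k))) (X k)"
    by metis
  then obtain L r where "strict_mono r" and L_W: "\<And>q. q \<in> E \<Longrightarrow> L q \<in> W"
    and L: "\<And>q. q \<in> E \<Longrightarrow> (\<lambda>k. X (r k) q) \<longlonglongrightarrow> L q"
    using seq_compact_finite_family[OF \<open>finite E\<close> \<open>compact W\<close>, of X] by (metis ens_eps_NE_def)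
  have w_av_lim: "(\<lambda>k. w_av E (Y k)) \<longlonglongrightarrow> w_av E Z"
    if "\<And>q. q \<in> E \<Longrightarrow> (\<lambda>k. Y k q) \<longlonglongrightarrow> Z q" for Y :: "nat \<Rightarrow> 'e \<Rightarrow> real^'d" and Z
    unfolding w_av_def by (intro tendsto_intros that)
  have "R e (w_av E L) \<le> R e (w_av E (L(e := v)))" if "e \<in> E" "v \<in> W" for e v
  proof -
    have "isCont (R e) x" for x
      using convex_on_continuous[OF open_UNIV conv[OF \<open>e \<in> E\<close>]] continuous_on_eq_continuous_at by blast
    then have lhs: "(\<lambda>k. R e (w_av E (X (r k)))) \<longlonglongrightarrow> R e (w_av E L)"
      and rhs: "(\<lambda>k. R e (w_av E ((X (r k))(e := v)))) \<longlonglongrightarrow> R e (w_av E (L(e := v)))"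
      using L by (auto intro!: isCont_tendsto_compose[of _ "R e"] w_av_lim)
    have "(\<lambda>k. inverse (real (Suc (r k)))) \<longlonglongrightarrow> 0"
      using LIMSEQ_subseq_LIMSEQ[OF LIMSEQ_inverse_real_of_nat \<open>strict_mono r\<close>] by (simp add: o_def)
    with rhs have "(\<lambda>k. R e (w_av E ((X (r k))(e := v))) + inverse (real (Suc (r k))))
        \<longlonglongrightarrow> R e (w_av E (L(e := v))) + 0"
      by (rule tendsto_add)
    moreover have "R e (w_av E (X (r k))) \<le> R e (w_av E ((X (r k))(e := v))) + inverse (real (Suc (r k)))" for k
      using X[of "r k"] that by (simp add: ens_eps_NE_def)
    ultimately show ?thesis
      using lhs by (intro LIMSEQ_le) auto
  qed
  then show ?thesis using L_W by (auto simp: ens_eps_NE_def)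
qed

lemma ens_NE_interior_global_min:
  fixes R :: "'e \<Rightarrow> real^'d \<Rightarrow> real"
  assumes "finite E" "ens_eps_NE E R W 0 ws" "e \<in> E" "ws e \<in> interior W"
    and conv: "convex_on UNIV (R e)"
  shows "R e (w_av E ws) \<le> R e v"
proof -
  define N where "N = real (card E)"
  have "N > 0" using assms(1,3) by (auto simp: N_def card_gt_0_iff)
  obtain r where "r > 0" and r: "ball (ws e) r \<subseteq> W"
    using \<open>ws e \<in> interior W\<close> mem_interior by blast
  have "R e (w_av E ws) \<le> R e y" if "y \<in> ball (w_av E ws) (r / N)" for y
  proof -
    define u where "u = ws e + N *\<^sub>R (y - w_av E ws)"
    have "dist (ws e) u = N * dist (w_av E ws) y"
      using \<open>N > 0\<close> by (simp add: u_def dist_norm norm_minus_commute)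
    also have "\<dots> < r" using that \<open>N > 0\<close> by (simp add: mult.commute pos_less_divide_eq)
    finally have "u \<in> W" using r by auto
    moreover have "w_av E (ws(e := u)) = y"
      using w_av_fun_upd[OF \<open>finite E\<close> \<open>e \<in> E\<close>, of ws u] w_av_fun_upd[OF \<open>finite E\<close> \<open>e \<in> E\<close>, of ws "ws e"]
        \<open>N > 0\<close> by (simp add: u_def N_def[symmetric] algebra_simps)
    ultimately show ?thesis
      using assms(2) \<open>e \<in> E\<close> unfolding ens_eps_NE_def by force
  qed
  then show ?thesis
    using convex_local_global_minimum[of "r / N" UNIV "R e" "w_av E ws"] \<open>r > 0\<close> \<open>N > 0\<close> conv by auto
qed

lemma convex_on_lin_risk:
  fixes D :: "((real^'n) \<times> real) measure" and Phi :: "real^'n \<Rightarrow> real^'d"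
  assumes integ: "\<And>w. integrable D (\<lambda>p. l (w \<bullet> Phi (fst p)) (snd p))"
    and l_convex: "\<And>z y. convex_on UNIV (\<lambda>w::real^'d. l (w \<bullet> z) y)"
  shows "convex_on UNIV (lin_risk D l Phi)"
proof (rule convex_onI)
  fix t :: real and x y :: "real^'d" assume t: "0 < t" "t < 1"
  have "lin_risk D l Phi ((1 - t) *\<^sub>R x + t *\<^sub>R y)
      \<le> (\<integral>p. (1 - t) * l (x \<bullet> Phi (fst p)) (snd p) + t * l (y \<bullet> Phi (fst p)) (snd p) \<partial>D)"
    unfolding lin_risk_def
  proof (rule integral_mono)
    fix p
    show "l (((1 - t) *\<^sub>R x + t *\<^sub>R y) \<bullet> Phi (fst p)) (snd p)
        \<le> (1 - t) * l (x \<bullet> Phi (fst p)) (snd p) + t * l (y \<bullet> Phi (fst p)) (snd p)"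
      using convex_onD[OF l_convex, of t x y] t by simp
  qed (use integ in auto)
  also have "\<dots> = (1 - t) * lin_risk D l Phi x + t * lin_risk D l Phi y"
    unfolding lin_risk_def using integ[of x] integ[of y] by simp
  finally show "lin_risk D l Phi ((1 - t) *\<^sub>R x + t *\<^sub>R y) \<le> (1 - t) * lin_risk D l Phi x + t * lin_risk D l Phi y" .
qed simp

lemma ens_pure_NE_iff:
  "ens_pure_NE E D l Phi W ws \<longleftrightarrow> ens_eps_NE E (\<lambda>e. lin_risk (D e) l Phi) W 0 ws"
  by (simp add: ens_pure_NE_def ens_utility_def ens_eps_NE_def)

theorem theorem3:
  fixes E :: "'e set"
    and D :: "'e \<Rightarrow> ((real^'n) \<times> real) measure"
    and Phi :: "real^'n \<Rightarrow> real^'d"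
    and l :: "real \<Rightarrow> real \<Rightarrow> real"
    and W :: "(real^'d) set"
  assumes finE: "finite E"
    and prob: "\<And>e. e \<in> E \<Longrightarrow> prob_space (D e)"
    and integ: "\<And>e w. e \<in> E \<Longrightarrow> integrable (D e) (\<lambda>p. l (w \<bullet> Phi (fst p)) (snd p))"
    and W_closed: "closed W" and W_bounded: "bounded W" and W_convex: "convex W"
    and W_int: "interior W \<noteq> {}"
    and l_convex: "\<And>z y. convex_on UNIV (\<lambda>w::real^'d. l (w \<bullet> z) y)"
    and l_cont: "\<And>z y. continuous_on UNIV (\<lambda>w::real^'d. l (w \<bullet> z) y)"
  shows "(\<exists>ws. ens_pure_NE E D l Phi W ws) \<and>
         (\<forall>ws. ens_pure_NE E D l Phi W ws \<and> (\<forall>q\<in>E. ws q \<in> interior W) \<longrightarrow>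
            (\<forall>e\<in>E. \<forall>v. lin_risk (D e) l Phi (w_av E ws) \<le> lin_risk (D e) l Phi v))"
proof -
  have risk_convex: "convex_on UNIV (lin_risk (D e) l Phi)" if "e \<in> E" for e
    using integ[OF that] l_convex by (rule convex_on_lin_risk)
  have "compact W" using W_closed W_bounded by (simp add: compact_eq_bounded_closed)
  moreover have "W \<noteq> {}" using W_int interior_subset by blast
  ultimately have "\<exists>ws. ens_pure_NE E D l Phi W ws"
    unfolding ens_pure_NE_iff
    using ens_NE_exists[of E W "\<lambda>e. lin_risk (D e) l Phi"] finE W_convex risk_convex by blast
  moreover have "lin_risk (D e) l Phi (w_av E ws) \<le> lin_risk (D e) l Phi v"
    if "ens_pure_NE E D l Phi W ws" "\<forall>q\<in>E. ws q \<in> interior W" "e \<in> E" for ws e v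
    using ens_NE_interior_global_min[of E "\<lambda>e. lin_risk (D e) l Phi" W ws e v] finE risk_convex that
    unfolding ens_pure_NE_iff by blast
  ultimately show ?thesis by blast
qed

end
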